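(* For any integer $k$ with $0\le k\le 2$, any code-tuple $F$ that is both $2$-bit delay decodable and extendable, any $i\in[F]$ and $s\in\mathcal{S}$, we have $|\bar{\mathcal{P}}^k_{F,i}(f_i(s))|+|\mathcal{P}^2_{F,\tau_i(s)}|\le 4$.
   Context: $\mathcal{S}$ is a finite source alphabet with $|\mathcal{S}|\ge 2$ and $\mathcal{C}=\{0,1\}$; $\mathcal{A}^k,\mathcal{A}^{\ast},\mathcal{A}^{+}$ are sequences of length $k$, finite length, positive finite length; $\lambda$ empty sequence; $\preceq$ prefix, $\prec$ proper prefix; $\mathrm{suff}(x_1\cdots x_n)=x_2\cdots x_n$. A code-tuple $F$ with $m\ge1$ code tables consists of maps $f_i:\mathcal{S}\to\mathcal{C}^{\ast}$ and $\tau_i:\mathcal{S}\to\{0,\dots,m-1\}$ for $i\in[F]=\{0,\dots,m-1\}$. $f_i^{\ast}(\lambda)=\lambda$, $f_i^{\ast}(\pmb{x})=f_i(x_1)f^{\ast}_{\tau_i(x_1)}(\mathrm{suff}(\pmb{x}))$. For integer $k\ge0$, $\pmb{b}\in\mathcal{C}^{\ast}$: $\mathcal{P}^k_{F,i}(\pmb{b})$ is the set of $\pmb{c}\in\mathcal{C}^k$ such that some $\pmb{x}=x_1\cdots x_n\in\mathcal{S}^{+}$ has $f_i^{\ast}(\pmb{x})\succeq\pmb{b}\pmb{c}$ and $f_i(x_1)\succeq\pmb{b}$; $\bar{\mathcal{P}}^k_{F,i}(\pmb{b})$ the same with $f_i(x_1)\succ\pmb{b}$; $\mathcal{P}^k_{F,i}=\mathcal{P}^k_{F,i}(\lambda)$.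 $F$ is $k$-bit delay decodable if $\mathcal{P}^k_{F,\tau_i(s)}\cap\bar{\mathcal{P}}^k_{F,i}(f_i(s))=\emptyset$ for all $i,s$, and $\mathcal{P}^k_{F,\tau_i(s)}\cap\mathcal{P}^k_{F,\tau_i(s')}=\emptyset$ whenever $s\ne s'$, $f_i(s)=f_i(s')$. $F$ is extendable if $\mathcal{P}^1_{F,i}\ne\emptyset$ for all $i\in[F]$. *)

theory Defs
  imports Main "HOL-Library.Sublist"
begin

text \<open>A code-tuple with m code tables over source alphabet 's and code alphabet
  {0,1} (rendered as bool).  Code tables are indexed by [F] = {0..<m};
  f i s is the codeword f_i(s), tau i s the next table tau_i(s).\<close>

definition code_tuple :: "nat \<Rightarrow> (nat \<Rightarrow> 's \<Rightarrow> bool list) \<Rightarrow> (nat \<Rightarrow> 's \<Rightarrow> nat) \<Rightarrow> bool" where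
  "code_tuple m f tau \<longleftrightarrow> m \<ge> 1 \<and> (\<forall>i<m. \<forall>s. tau i s < m)"

fun fstar :: "(nat \<Rightarrow> 's \<Rightarrow> bool list) \<Rightarrow> (nat \<Rightarrow> 's \<Rightarrow> nat) \<Rightarrow> nat \<Rightarrow> 's list \<Rightarrow> bool list" where
  "fstar f tau i [] = []"
| "fstar f tau i (x # xs) = f i x @ fstar f tau (tau i x) xs"

definition PF :: "(nat \<Rightarrow> 's \<Rightarrow> bool list) \<Rightarrow> (nat \<Rightarrow> 's \<Rightarrow> nat) \<Rightarrow> nat \<Rightarrow> nat \<Rightarrow> bool list \<Rightarrow> bool list set" where
  "PF f tau k i b = {c. length c = k \<and>
     (\<exists>x xs. prefix (b @ c) (fstar f tau i (x # xs)) \<and> prefix b (f i x))}"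

definition PFbar :: "(nat \<Rightarrow> 's \<Rightarrow> bool list) \<Rightarrow> (nat \<Rightarrow> 's \<Rightarrow> nat) \<Rightarrow> nat \<Rightarrow> nat \<Rightarrow> bool list \<Rightarrow> bool list set" where
  "PFbar f tau k i b = {c. length c = k \<and>
     (\<exists>x xs. prefix (b @ c) (fstar f tau i (x # xs)) \<and> strict_prefix b (f i x))}"

definition k_bit_delay_decodable :: "nat \<Rightarrow> nat \<Rightarrow> (nat \<Rightarrow> 's \<Rightarrow> bool list) \<Rightarrow> (nat \<Rightarrow> 's \<Rightarrow> nat) \<Rightarrow> bool" where
  "k_bit_delay_decodable k m f tau \<longleftrightarrow>
     (\<forall>i<m. \<forall>s. PF f tau k (tau i s) [] \<inter> PFbar f tau k i (f i s) = {}) \<and>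
     (\<forall>i<m. \<forall>s s'. s \<noteq> s' \<and> f i s = f i s' \<longrightarrow>
        PF f tau k (tau i s) [] \<inter> PF f tau k (tau i s') [] = {})"

definition extendable :: "nat \<Rightarrow> (nat \<Rightarrow> 's \<Rightarrow> bool list) \<Rightarrow> (nat \<Rightarrow> 's \<Rightarrow> nat) \<Rightarrow> bool" where
  "extendable m f tau \<longleftrightarrow> (\<forall>i<m. PF f tau 1 i [] \<noteq> {})"

end

theory Submission
  imports Defs
begin

text \<open>Decodability with delay \<open>n\<close> says that the length-\<open>n\<close> continuations of
  \<open>f\<^sub>i(s)\<close> inside a strictly longer codeword and the length-\<open>n\<close> prefixes of codes from table
  \<open>\<tau>\<^sub>i(s)\<close> are disjoint sets of words of length \<open>n\<close>, so their sizes add up to at most \<open>2\<^sup>n\<close>.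
  For \<open>k \<le> n\<close>, extendability lets every length-\<open>k\<close> continuation be prolonged to one of
  length \<open>n\<close>, so truncation maps the length-\<open>n\<close> continuations onto the length-\<open>k\<close> ones and
  there are no more of the latter.\<close>

fun tau_star :: "(nat \<Rightarrow> 's \<Rightarrow> nat) \<Rightarrow> nat \<Rightarrow> 's list \<Rightarrow> nat" where
  "tau_star tau j [] = j"
| "tau_star tau j (x # xs) = tau_star tau (tau j x) xs"

lemma fstar_append:
  "fstar f tau j (xs @ ys) = fstar f tau j xs @ fstar f tau (tau_star tau j xs) ys"
  by (induction xs arbitrary: j) auto

lemma tau_star_less:
  assumes "code_tuple m f tau" "j < m"
  shows "tau_star tau j xs < m"
  using assms(2) by (induction xs arbitrary: j) (use assms(1) in \<open>auto simp: code_tuple_def\<close>)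

lemma extendable_fstar_length_ge:
  assumes "code_tuple m f tau" "extendable m f tau" "j < m"
  shows "\<exists>ys. n \<le> length (fstar f tau j ys)"
  using assms(3)
proof (induction n arbitrary: j)
  case 0
  then show ?case by auto
next
  case (Suc n)
  from assms(2) Suc.prems obtain c where "c \<in> PF f tau 1 j []"
    unfolding extendable_def by blast
  then obtain xs where "length c = 1" "prefix c (fstar f tau j xs)"
    unfolding PF_def by (auto simp del: fstar.simps)
  then have nonempty: "1 \<le> length (fstar f tau j xs)"
    using prefix_length_le by fastforce
  obtain ys where "n \<le> length (fstar f tau (tau_star tau j xs) ys)"
    using Suc.IH[OF tau_star_less[OF assms(1) Suc.prems]] by blast
  then have "Suc n \<le> length (fstar f tau j (xs @ ys))"
    using nonempty by (simp add: fstar_append)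
  then show ?case by blast
qed

lemma PF_subset_lists_length: "PF f tau k i b \<subseteq> {c. length c = k}"
  unfolding PF_def by auto

lemma PFbar_subset_lists_length: "PFbar f tau k i b \<subseteq> {c. length c = k}"
  unfolding PFbar_def by auto

lemma card_bool_lists_length: "card {c :: bool list. length c = k} = 2 ^ k"
  using card_lists_length_eq[of "UNIV :: bool set" k] by simp

lemma finite_bool_lists_length: "finite {c :: bool list. length c = k}"
  using finite_lists_length_eq[of "UNIV :: bool set" k] by simp

lemma PFbar_subset_image_take:
  assumes "code_tuple m f tau" "extendable m f tau" "i < m" "k \<le> n"
  shows "PFbar f tau k i b \<subseteq> take k ` PFbar f tau n i b"
proof
  fix c assume "c \<in> PFbar f tau k i b"
  then obtain x xs where len_c: "length c = k" and prefix_c: "prefix (b @ c) (fstar f tau i (x # xs))"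
    and strict: "strict_prefix b (f i x)"
    unfolding PFbar_def by auto
  obtain ys where long: "n \<le> length (fstar f tau (tau_star tau i (x # xs)) ys)"
    using extendable_fstar_length_ge[OF assms(1,2) tau_star_less[OF assms(1,3)]] by blast
  define w where "w = fstar f tau i (x # xs @ ys)"
  have w_split: "w = fstar f tau i (x # xs) @ fstar f tau (tau_star tau i (x # xs)) ys"
    unfolding w_def using fstar_append[of f tau i "x # xs" ys] by simp
  then have "prefix (b @ c) w"
    using prefix_c by (metis prefix_prefix)
  then obtain r where w_eq: "w = b @ c @ r"
    by (auto simp: prefix_def)
  have "length b + n \<le> length w"
    using prefix_length_le[OF prefix_c] long w_split by simp
  define c' where "c' = take n (drop (length b) w)"
  have "length c' = n"
    using \<open>length b + n \<le> length w\<close> unfolding c'_def by simp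
  moreover have "prefix (b @ c') w"
    unfolding c'_def w_eq by (simp del: take_append add: take_is_prefix)
  ultimately have "c' \<in> PFbar f tau n i b"
    using strict unfolding PFbar_def w_def by blast
  moreover have "take k c' = c"
    unfolding c'_def w_eq using len_c assms(4) by simp
  ultimately show "c \<in> take k ` PFbar f tau n i b" by force
qed

lemma card_PFbar_mono:
  assumes "code_tuple m f tau" "extendable m f tau" "i < m" "k \<le> n"
  shows "card (PFbar f tau k i b) \<le> card (PFbar f tau n i b)"
proof -
  have "finite (PFbar f tau n i b)"
    using PFbar_subset_lists_length finite_bool_lists_length by (rule finite_subset)
  then show ?thesis
    using PFbar_subset_image_take[OF assms] by (meson card_image_le card_mono finite_imageI le_trans)
qed

lemma delay_decodable_card_PFbar_PF:
  assumes "k_bit_delay_decodable n m f tau" "i < m"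
  shows "card (PFbar f tau n i (f i s)) + card (PF f tau n (tau i s) []) \<le> 2 ^ n"
proof -
  let ?A = "PFbar f tau n i (f i s)" and ?B = "PF f tau n (tau i s) []"
  have "?A \<inter> ?B = {}"
    using assms unfolding k_bit_delay_decodable_def by blast
  moreover have "finite ?A" "finite ?B"
    by (rule finite_subset[OF PFbar_subset_lists_length finite_bool_lists_length]
        finite_subset[OF PF_subset_lists_length finite_bool_lists_length])+
  ultimately have "card ?A + card ?B = card (?A \<union> ?B)"
    by (simp add: card_Un_disjoint)
  also have "\<dots> \<le> card {c :: bool list. length c = n}"
    using PFbar_subset_lists_length PF_subset_lists_length
    by (intro card_mono[OF finite_bool_lists_length]) blast
  finally show ?thesis
    by (simp add: card_bool_lists_length)
qed

theorem lemma8: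
  fixes m :: nat and f :: "nat \<Rightarrow> 's::finite \<Rightarrow> bool list" and tau :: "nat \<Rightarrow> 's \<Rightarrow> nat"
    and k i :: nat and s :: 's
  assumes "card (UNIV :: 's set) \<ge> 2"
    and "code_tuple m f tau"
    and "k \<le> 2"
    and "k_bit_delay_decodable 2 m f tau"
    and "extendable m f tau"
    and "i < m"
  shows "card (PFbar f tau k i (f i s)) + card (PF f tau 2 (tau i s) []) \<le> 4"
proof -
  have "card (PFbar f tau k i (f i s)) \<le> card (PFbar f tau 2 i (f i s))"
    using card_PFbar_mono[OF assms(2,5,6,3)] .
  moreover have "card (PFbar f tau 2 i (f i s)) + card (PF f tau 2 (tau i s) []) \<le> 2 ^ 2"
    using delay_decodable_card_PFbar_PF[OF assms(4,6)] .
  ultimately show ?thesis by simp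
qed

end
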